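(* Let $\Omega$ be a standard star graph and let $f$ be a generic eigenfunction of $\Omega$ with eigenvalue $k^2$ ($k>0$). Assume $f$ has no Neumann points. Then there exists a standard star graph $\widetilde\Omega$ such that: (1) $|\partial\Omega|=|\partial\widetilde\Omega|$; (2) there is a generic eigenfunction $\tilde f$ of $\widetilde\Omega$ with eigenvalue $k^2$; (3) $\tilde f$ has no Neumann points, so $\widetilde\Omega$ is its single Neumann domain; (4) $N(\Omega)+N(\widetilde\Omega)=|\partial\Omega|$ and $\rho(\Omega)+\rho(\widetilde\Omega)=|\partial\Omega|$, where spectral positions and wavelength capacities are taken with respect to $k$.
   Context: A star graph consists of a central vertex joined by edges to degree-one vertices; regarded as a standard graph it carries the Laplacian $-d^2/dx^2$ with Neumann (Kirchhoff) vertex conditions (continuity and vanishing sum of outgoing derivatives). $\partial\Omega$ is the set of degree-one vertices. An eigenfunction is generic if its eigenvalue is simple, it is nonzero at every vertex, and its outgoing derivatives at the non-boundary vertices are nonzero. Neumann points of $f$ are points in edge interiors where $f'=0$. For a graph $\Omega$ with total edge length $|\Omega|$: $N(\Omega):=|\{0\le\lambda<k^2:\lambda\text{ eigenvalue of }\Omega\}|$ (with multiplicity) and $\rho(\Omega):=|\Omega|k/\pi$. *)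

theory Defs
  imports "HOL-Analysis.Analysis" "HOL-Library.Function_Algebras"
begin

text \<open>A star graph with n edges (n >= 2, so that the centre is not itself a
degree-one vertex) is given by edge lengths L 0, ..., L (n-1) > 0.  Edge j is
parametrised by x in [0, L j], with x = 0 the central vertex and x = L j the
j-th degree-one (boundary) vertex.  Hence the boundary has exactly n points.
A function on the graph is a family f :: nat => real => real, f j being the
restriction to edge j; we normalise f j x = 0 off the graph so that the
eigenspaces are genuine (finite-dimensional) subspaces of the function space.\<close>

definition star_graph :: "nat \<Rightarrow> (nat \<Rightarrow> real) \<Rightarrow> bool" where
  "star_graph n L \<longleftrightarrow> n \<ge> 2 \<and> (\<forall>j<n. L j > 0)"

definition total_length :: "nat \<Rightarrow> (nat \<Rightarrow> real) \<Rightarrow> real" where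
  "total_length n L = (\<Sum>j<n. L j)"

text \<open>f solves the eigenvalue problem for -d^2/dx^2 with eigenvalue lam,
continuity and Kirchhoff (zero sum of outgoing derivatives) at the centre,
and Neumann (Kirchhoff) conditions at the degree-one vertices; df is its
derivative along the edges (outgoing from the centre).\<close>

definition eig_sol ::
  "nat \<Rightarrow> (nat \<Rightarrow> real) \<Rightarrow> real \<Rightarrow> (nat \<Rightarrow> real \<Rightarrow> real) \<Rightarrow> (nat \<Rightarrow> real \<Rightarrow> real) \<Rightarrow> bool" where
  "eig_sol n L lam f df \<longleftrightarrow>
     (\<forall>j x. (j \<ge> n \<or> x \<notin> {0..L j}) \<longrightarrow> f j x = 0) \<and>
     (\<exists>ddf. \<forall>j<n. \<forall>x\<in>{0..L j}.
        (f j has_real_derivative df j x) (at x within {0..L j}) \<and>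
        (df j has_real_derivative ddf j x) (at x within {0..L j}) \<and>
        - ddf j x = lam * f j x) \<and>
     (\<forall>i<n. \<forall>j<n. f i 0 = f j 0) \<and>
     (\<Sum>j<n. df j 0) = 0 \<and>
     (\<forall>j<n. df j (L j) = 0)"

definition eigenspace_sg :: "nat \<Rightarrow> (nat \<Rightarrow> real) \<Rightarrow> real \<Rightarrow> (nat \<Rightarrow> real \<Rightarrow> real) set" where
  "eigenspace_sg n L lam = {f. \<exists>df. eig_sol n L lam f df}"

definition fscale :: "real \<Rightarrow> (nat \<Rightarrow> real \<Rightarrow> real) \<Rightarrow> (nat \<Rightarrow> real \<Rightarrow> real)" where
  "fscale c f = (\<lambda>j x. c * f j x)"

definition multiplicity_sg :: "nat \<Rightarrow> (nat \<Rightarrow> real) \<Rightarrow> real \<Rightarrow> nat" where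
  "multiplicity_sg n L lam = vector_space.dim fscale (eigenspace_sg n L lam)"

definition is_eigenvalue_sg :: "nat \<Rightarrow> (nat \<Rightarrow> real) \<Rightarrow> real \<Rightarrow> bool" where
  "is_eigenvalue_sg n L lam \<longleftrightarrow> (\<exists>f\<in>eigenspace_sg n L lam. f \<noteq> 0)"

definition eigenfunction_sg ::
  "nat \<Rightarrow> (nat \<Rightarrow> real) \<Rightarrow> real \<Rightarrow> (nat \<Rightarrow> real \<Rightarrow> real) \<Rightarrow> bool" where
  "eigenfunction_sg n L lam f \<longleftrightarrow> f \<in> eigenspace_sg n L lam \<and> f \<noteq> 0"

text \<open>Generic: simple eigenvalue, nonzero at every vertex (centre and leaves),
nonzero outgoing derivatives at the (only) non-boundary vertex, the centre.\<close>

definition generic_sg ::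
  "nat \<Rightarrow> (nat \<Rightarrow> real) \<Rightarrow> real \<Rightarrow> (nat \<Rightarrow> real \<Rightarrow> real) \<Rightarrow> bool" where
  "generic_sg n L lam f \<longleftrightarrow>
     eigenfunction_sg n L lam f \<and> multiplicity_sg n L lam = 1 \<and>
     (\<forall>j<n. f j 0 \<noteq> 0 \<and> f j (L j) \<noteq> 0) \<and>
     (\<exists>df. eig_sol n L lam f df \<and> (\<forall>j<n. df j 0 \<noteq> 0))"

definition no_neumann_points ::
  "nat \<Rightarrow> (nat \<Rightarrow> real) \<Rightarrow> real \<Rightarrow> (nat \<Rightarrow> real \<Rightarrow> real) \<Rightarrow> bool" where
  "no_neumann_points n L lam f \<longleftrightarrow>
     (\<exists>df. eig_sol n L lam f df \<and> (\<forall>j<n. \<forall>x\<in>{0<..<L j}. df j x \<noteq> 0))"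

definition spec_pos :: "nat \<Rightarrow> (nat \<Rightarrow> real) \<Rightarrow> real \<Rightarrow> nat" where
  "spec_pos n L k = (\<Sum>lam\<in>{lam. 0 \<le> lam \<and> lam < k^2 \<and> is_eigenvalue_sg n L lam}.
                       multiplicity_sg n L lam)"

definition wl_capacity :: "nat \<Rightarrow> (nat \<Rightarrow> real) \<Rightarrow> real \<Rightarrow> real" where
  "wl_capacity n L k = total_length n L * k / pi"

end

theory Submission
  imports Defs
begin

text \<open>On each edge an eigenfunction with eigenvalue mu^2 is A_j cos (mu (L_j - x)), so away from
  the poles pi / (2 L_j) the eigenvalue condition is the secular equation
  sum_j tan (mu L_j) = 0. A generic eigenfunction with eigenvalue k^2 and no Neumann points
  forces 0 < k L_j < pi and k L_j \<noteq> pi/2; replacing every L_j by pi/k - L_j preserves this,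
  since it only flips the sign of each tan (k L_j). On such a graph the secular function
  increases between consecutive poles below k, so the eigenvalues below k^2 are 0, exactly one
  simple eigenvalue between two consecutive poles, and every pole shared by m edges, with
  multiplicity m - 1. Hence N equals the number of edges with k L_j > pi/2. The reflection
  exchanges these edges with the others, and the two total lengths add up to n pi/k.\<close>

section \<open>Eigenfunctions of a star graph\<close>

lemma neumann_leaf_solution:
  fixes f df ddf :: "real \<Rightarrow> real" and l \<mu> x :: real
  assumes ode: "\<forall>y\<in>{0..l}. (f has_real_derivative df y) (at y within {0..l}) \<and>
        (df has_real_derivative ddf y) (at y within {0..l}) \<and> - ddf y = \<mu>^2 * f y"
    and leaf: "df l = 0" and x: "x \<in> {0..l}"
  shows "f x = f l * cos (\<mu> * (l - x)) \<and> df x = f l * \<mu> * sin (\<mu> * (l - x))"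
proof -
  define h where "h y = f y - f l * cos (\<mu> * (l - y))" for y
  define h' where "h' y = df y - f l * \<mu> * sin (\<mu> * (l - y))" for y
  have l: "l \<in> {0..l}" using x by auto
  have h_deriv: "(h has_real_derivative h' y) (at y within {0..l})" if "y \<in> {0..l}" for y
    unfolding h_def h'_def using ode that by (auto intro!: derivative_eq_intros simp: algebra_simps)
  have h'_deriv: "(h' has_real_derivative - (\<mu>^2 * h y)) (at y within {0..l})" if "y \<in> {0..l}" for y
  proof -
    have "(h' has_real_derivative ddf y - f l * \<mu> * (cos (\<mu> * (l - y)) * - \<mu>)) (at y within {0..l})"
      unfolding h'_def using ode that by (auto intro!: derivative_eq_intros simp: algebra_simps)
    moreover have "ddf y - f l * \<mu> * (cos (\<mu> * (l - y)) * - \<mu>) = - (\<mu>^2 * h y)"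
      using ode that unfolding h_def by (force simp: algebra_simps power2_eq_square)
    ultimately show ?thesis by simp
  qed
  \<comment> \<open>The energy of the difference h from the claimed solution is conserved and vanishes at the leaf.\<close>
  define E where "E y = (h' y)^2 + \<mu>^2 * (h y)^2" for y
  have "(E has_real_derivative 0) (at y within {0..l})" if "y \<in> {0..l}" for y
  proof -
    have "(E has_real_derivative 2 * h' y * - (\<mu>^2 * h y) + \<mu>^2 * (2 * h y * h' y)) (at y within {0..l})"
      unfolding E_def using h_deriv[OF that] h'_deriv[OF that] by (auto intro!: derivative_eq_intros)
    then show ?thesis by (simp add: algebra_simps)
  qed
  then obtain c where "\<forall>y\<in>{0..l}. E y = c"
    using has_field_derivative_zero_constant[of "{0..l}" E] by auto
  moreover have "E l = 0" unfolding E_def h_def h'_def using leaf by simp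
  ultimately have E_0: "E y = 0" if "y \<in> {0..l}" for y using that l by auto
  have h'_0: "h' y = 0" if "y \<in> {0..l}" for y
  proof -
    have "(h' y)^2 + \<mu>^2 * (h y)^2 = 0" using E_0[OF that] by (simp add: E_def)
    moreover have "\<mu>^2 * (h y)^2 \<ge> 0" by simp
    ultimately have "(h' y)^2 = 0" by (smt (verit) zero_le_power2)
    then show ?thesis by simp
  qed
  obtain c' where "\<forall>y\<in>{0..l}. h y = c'"
    using has_field_derivative_zero_constant[of "{0..l}" h] h_deriv h'_0 by force
  moreover have "h l = 0" by (simp add: h_def)
  ultimately have "h x = 0" using x l by auto
  with h'_0[OF x] show ?thesis by (simp add: h_def h'_def)
qed

definition star_cos :: "nat \<Rightarrow> (nat \<Rightarrow> real) \<Rightarrow> real \<Rightarrow> (nat \<Rightarrow> real) \<Rightarrow> nat \<Rightarrow> real \<Rightarrow> real" where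
  "star_cos n L \<mu> A = (\<lambda>j x. if j < n \<and> x \<in> {0..L j} then A j * cos (\<mu> * (L j - x)) else 0)"

definition star_cos_deriv :: "(nat \<Rightarrow> real) \<Rightarrow> real \<Rightarrow> (nat \<Rightarrow> real) \<Rightarrow> nat \<Rightarrow> real \<Rightarrow> real" where
  "star_cos_deriv L \<mu> A = (\<lambda>j x. A j * \<mu> * sin (\<mu> * (L j - x)))"

definition vertex_conds :: "nat \<Rightarrow> (nat \<Rightarrow> real) \<Rightarrow> real \<Rightarrow> (nat \<Rightarrow> real) \<Rightarrow> bool" where
  "vertex_conds n L \<mu> A \<longleftrightarrow>
     (\<forall>i<n. \<forall>j<n. A i * cos (\<mu> * L i) = A j * cos (\<mu> * L j)) \<and>
     (\<Sum>j<n. A j * \<mu> * sin (\<mu> * L j)) = 0"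

lemma star_cos_leaf: "j < n \<Longrightarrow> 0 \<le> L j \<Longrightarrow> star_cos n L \<mu> A j (L j) = A j"
  by (simp add: star_cos_def)

lemma star_cos_centre: "j < n \<Longrightarrow> 0 \<le> L j \<Longrightarrow> star_cos n L \<mu> A j 0 = A j * cos (\<mu> * L j)"
  by (simp add: star_cos_def)

lemma star_cos_nonzero: "j < n \<Longrightarrow> 0 \<le> L j \<Longrightarrow> A j \<noteq> 0 \<Longrightarrow> star_cos n L \<mu> A \<noteq> 0"
  by (metis star_cos_leaf zero_fun_def)

lemma star_cos_cong: "(\<And>j. j < n \<Longrightarrow> A j = B j) \<Longrightarrow> star_cos n L \<mu> A = star_cos n L \<mu> B"
  by (auto simp: star_cos_def fun_eq_iff)

lemma star_cos_scale: "star_cos n L \<mu> (\<lambda>j. c * A j) = fscale c (star_cos n L \<mu> A)"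
  by (auto simp: star_cos_def fun_eq_iff fscale_def)

lemma sum_apply2: "(sum g S) j x = (\<Sum>i\<in>S. g i j x)" for g :: "'a \<Rightarrow> nat \<Rightarrow> real \<Rightarrow> real"
  by (induct S rule: infinite_finite_induct) auto

lemma star_cos_sum: "star_cos n L \<mu> (\<lambda>j. \<Sum>i\<in>I. A i j) = (\<Sum>i\<in>I. star_cos n L \<mu> (A i))"
  by (auto simp: star_cos_def fun_eq_iff sum_apply2 sum_distrib_right)

lemma eig_sol_star_cos:
  assumes L_nonneg: "\<forall>j<n. 0 \<le> L j" and conds: "vertex_conds n L \<mu> A"
  shows "eig_sol n L (\<mu>^2) (star_cos n L \<mu> A) (star_cos_deriv L \<mu> A)"
proof -
  define ddf where "ddf = (\<lambda>j x. A j * \<mu> * (cos (\<mu> * (L j - x)) * - \<mu>))"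
  have ode: "\<forall>j<n. \<forall>x\<in>{0..L j}.
      (star_cos n L \<mu> A j has_real_derivative star_cos_deriv L \<mu> A j x) (at x within {0..L j}) \<and>
      (star_cos_deriv L \<mu> A j has_real_derivative ddf j x) (at x within {0..L j}) \<and>
      - ddf j x = \<mu>^2 * star_cos n L \<mu> A j x"
  proof (intro allI impI ballI conjI)
    fix j x assume j: "j < n" and x: "x \<in> {0..L j}"
    have "((\<lambda>x. A j * cos (\<mu> * (L j - x))) has_real_derivative star_cos_deriv L \<mu> A j x) (at x within {0..L j})"
      unfolding star_cos_deriv_def by (auto intro!: derivative_eq_intros)
    then show "(star_cos n L \<mu> A j has_real_derivative star_cos_deriv L \<mu> A j x) (at x within {0..L j})"
      by (rule has_field_derivative_transform_within[where d=1]) (use j x in \<open>auto simp: star_cos_def\<close>)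
    show "(star_cos_deriv L \<mu> A j has_real_derivative ddf j x) (at x within {0..L j})"
      unfolding star_cos_deriv_def ddf_def by (auto intro!: derivative_eq_intros)
    show "- ddf j x = \<mu>^2 * star_cos n L \<mu> A j x"
      using j x by (simp add: ddf_def star_cos_def power2_eq_square)
  qed
  have equal: "\<forall>i<n. \<forall>j<n. A i * cos (\<mu> * L i) = A j * cos (\<mu> * L j)"
    and balance: "(\<Sum>j<n. A j * \<mu> * sin (\<mu> * L j)) = 0"
    using conds unfolding vertex_conds_def by blast+
  have cont: "\<forall>i<n. \<forall>j<n. star_cos n L \<mu> A i 0 = star_cos n L \<mu> A j 0"
  proof (intro allI impI)
    fix i j assume "i < n" "j < n"
    moreover from this have "A i * cos (\<mu> * L i) = A j * cos (\<mu> * L j)" using equal by blast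
    ultimately show "star_cos n L \<mu> A i 0 = star_cos n L \<mu> A j 0" using L_nonneg by (simp add: star_cos_centre)
  qed
  have off: "\<forall>j x. (j \<ge> n \<or> x \<notin> {0..L j}) \<longrightarrow> star_cos n L \<mu> A j x = 0"
    by (simp add: star_cos_def)
  have kirchhoff: "(\<Sum>j<n. star_cos_deriv L \<mu> A j 0) = 0"
    using balance by (simp add: star_cos_deriv_def)
  have leaf: "\<forall>j<n. star_cos_deriv L \<mu> A j (L j) = 0"
    by (simp add: star_cos_deriv_def)
  show ?thesis
    unfolding eig_sol_def by (intro conjI exI[of _ ddf]) (fact off ode cont kirchhoff leaf)+
qed

lemma eig_sol_imp_star_cos:
  assumes L_nonneg: "\<forall>j<n. 0 \<le> L j" and sol: "eig_sol n L (\<mu>^2) f df"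
  shows "f = star_cos n L \<mu> (\<lambda>j. f j (L j))"
    and "vertex_conds n L \<mu> (\<lambda>j. f j (L j))"
    and "\<And>j x. j < n \<Longrightarrow> x \<in> {0..L j} \<Longrightarrow> df j x = star_cos_deriv L \<mu> (\<lambda>j. f j (L j)) j x"
proof -
  from sol obtain ddf where
    off: "\<forall>j x. (j \<ge> n \<or> x \<notin> {0..L j}) \<longrightarrow> f j x = 0" and
    ode: "\<forall>j<n. \<forall>x\<in>{0..L j}. (f j has_real_derivative df j x) (at x within {0..L j}) \<and>
        (df j has_real_derivative ddf j x) (at x within {0..L j}) \<and> - ddf j x = \<mu>^2 * f j x" and
    cont: "\<forall>i<n. \<forall>j<n. f i 0 = f j 0" and
    kirchhoff: "(\<Sum>j<n. df j 0) = 0" and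
    leaf: "\<forall>j<n. df j (L j) = 0"
    unfolding eig_sol_def by (elim conjE exE) (rule that; assumption)
  have edge: "f j x = f j (L j) * cos (\<mu> * (L j - x)) \<and> df j x = f j (L j) * \<mu> * sin (\<mu> * (L j - x))"
    if "j < n" "x \<in> {0..L j}" for j x
    using neumann_leaf_solution[of "L j" "f j" "df j" "ddf j" \<mu> x] ode leaf that by blast
  show "f = star_cos n L \<mu> (\<lambda>j. f j (L j))"
  proof (intro ext)
    fix j x
    show "f j x = star_cos n L \<mu> (\<lambda>j. f j (L j)) j x"
    proof (cases "j < n \<and> x \<in> {0..L j}")
      case True
      then have "f j x = f j (L j) * cos (\<mu> * (L j - x))" using edge by blast
      with True show ?thesis by (simp add: star_cos_def)
    next
      case False
      then show ?thesis using off by (auto simp: star_cos_def)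
    qed
  qed
  show "df j x = star_cos_deriv L \<mu> (\<lambda>j. f j (L j)) j x" if "j < n" "x \<in> {0..L j}" for j x
    using edge[OF that] by (simp add: star_cos_deriv_def)
  have centre: "0 \<in> {0..L j}" if "j < n" for j using L_nonneg that by simp
  show "vertex_conds n L \<mu> (\<lambda>j. f j (L j))"
    unfolding vertex_conds_def
  proof (intro conjI allI impI)
    fix i j assume "i < n" "j < n"
    moreover from this have "f i 0 = f j 0" using cont by blast
    ultimately show "f i (L i) * cos (\<mu> * L i) = f j (L j) * cos (\<mu> * L j)"
      using edge[of i 0] edge[of j 0] centre by simp
  next
    have "(\<Sum>j<n. f j (L j) * \<mu> * sin (\<mu> * L j)) = (\<Sum>j<n. df j 0)"
    proof (rule sum.cong)
      fix j assume "j \<in> {..<n}"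
      then show "f j (L j) * \<mu> * sin (\<mu> * L j) = df j 0" using edge[of j 0] centre by simp
    qed simp
    then show "(\<Sum>j<n. f j (L j) * \<mu> * sin (\<mu> * L j)) = 0" using kirchhoff by simp
  qed
qed

lemma eigenspace_sg_eq:
  assumes "\<forall>j<n. 0 \<le> L j"
  shows "eigenspace_sg n L (\<mu>^2) = {star_cos n L \<mu> A | A. vertex_conds n L \<mu> A}"
  unfolding eigenspace_sg_def
  using eig_sol_imp_star_cos(1,2)[OF assms] eig_sol_star_cos[OF assms] by blast

section \<open>Multiplicities\<close>

interpretation vs: vector_space fscale
  by unfold_locales (simp_all add: fscale_def fun_eq_iff algebra_simps)

lemma multiplicity_sg_eq_0:
  assumes "\<not> is_eigenvalue_sg n L lam"
  shows "multiplicity_sg n L lam = 0"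
  unfolding multiplicity_sg_def
proof (rule vs.dim_unique[of "{}"])
  show "eigenspace_sg n L lam \<subseteq> vs.span {}" using assms by (auto simp: is_eigenvalue_sg_def)
qed (simp_all add: vs.independent_empty)

lemma dim_range_fscale:
  assumes "v \<noteq> 0"
  shows "vs.dim (range (\<lambda>c. fscale c v)) = 1"
  using vs.dim_span_eq_card_independent[of "{v}"] assms by (simp add: vs.span_singleton)

lemma eigenspace_sg_no_pole:
  assumes L_nonneg: "\<forall>j<n. 0 \<le> L j" and "0 < n"
    and no_pole: "\<forall>j<n. cos (\<mu> * L j) \<noteq> 0"
  shows "eigenspace_sg n L (\<mu>^2) =
    {fscale c (star_cos n L \<mu> (\<lambda>j. 1 / cos (\<mu> * L j))) | c. c * \<mu> * (\<Sum>j<n. tan (\<mu> * L j)) = 0}"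
    (is "_ = ?rhs")
proof -
  have kirchhoff_sum: "(\<Sum>j<n. c * (1 / cos (\<mu> * L j)) * \<mu> * sin (\<mu> * L j)) =
      c * \<mu> * (\<Sum>j<n. tan (\<mu> * L j))" for c
    by (simp add: sum_distrib_left tan_def field_simps)
  have conds_iff: "vertex_conds n L \<mu> A \<longleftrightarrow>
      (\<exists>c. (\<forall>j<n. A j = c * (1 / cos (\<mu> * L j))) \<and> c * \<mu> * (\<Sum>j<n. tan (\<mu> * L j)) = 0)" for A
  proof
    assume conds: "vertex_conds n L \<mu> A"
    define c where "c = A 0 * cos (\<mu> * L 0)"
    have A_eq: "A j = c * (1 / cos (\<mu> * L j))" if "j < n" for j
    proof -
      have "A j * cos (\<mu> * L j) = c" using conds that \<open>0 < n\<close> unfolding c_def vertex_conds_def by blast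
      then show ?thesis using no_pole that by (simp add: field_simps)
    qed
    have "(\<Sum>j<n. A j * \<mu> * sin (\<mu> * L j)) = (\<Sum>j<n. c * (1 / cos (\<mu> * L j)) * \<mu> * sin (\<mu> * L j))"
      using A_eq by (intro sum.cong) auto
    also have "\<dots> = c * \<mu> * (\<Sum>j<n. tan (\<mu> * L j))" by (rule kirchhoff_sum)
    finally have "(\<Sum>j<n. A j * \<mu> * sin (\<mu> * L j)) = c * \<mu> * (\<Sum>j<n. tan (\<mu> * L j))" .
    moreover have "(\<Sum>j<n. A j * \<mu> * sin (\<mu> * L j)) = 0"
      using conds unfolding vertex_conds_def by blast
    ultimately have "c * \<mu> * (\<Sum>j<n. tan (\<mu> * L j)) = 0" by simp
    then show "\<exists>c. (\<forall>j<n. A j = c * (1 / cos (\<mu> * L j))) \<and> c * \<mu> * (\<Sum>j<n. tan (\<mu> * L j)) = 0"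
      using A_eq by blast
  next
    assume "\<exists>c. (\<forall>j<n. A j = c * (1 / cos (\<mu> * L j))) \<and> c * \<mu> * (\<Sum>j<n. tan (\<mu> * L j)) = 0"
    then obtain c where A_eq: "\<forall>j<n. A j = c * (1 / cos (\<mu> * L j))"
      and root: "c * \<mu> * (\<Sum>j<n. tan (\<mu> * L j)) = 0" by blast
    have "(\<Sum>j<n. A j * \<mu> * sin (\<mu> * L j)) = (\<Sum>j<n. c * (1 / cos (\<mu> * L j)) * \<mu> * sin (\<mu> * L j))"
      using A_eq by (intro sum.cong) auto
    also have "\<dots> = 0" using kirchhoff_sum root by simp
    finally show "vertex_conds n L \<mu> A"
      using A_eq no_pole unfolding vertex_conds_def by simp
  qed
  show ?thesis
    unfolding eigenspace_sg_eq[OF L_nonneg]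
  proof (intro set_eqI iffI)
    fix f assume "f \<in> {star_cos n L \<mu> A |A. vertex_conds n L \<mu> A}"
    then obtain A c where f: "f = star_cos n L \<mu> A" and A_eq: "\<forall>j<n. A j = c * (1 / cos (\<mu> * L j))"
      and root: "c * \<mu> * (\<Sum>j<n. tan (\<mu> * L j)) = 0"
      using conds_iff by blast
    have "f = fscale c (star_cos n L \<mu> (\<lambda>j. 1 / cos (\<mu> * L j)))"
      unfolding f star_cos_scale[symmetric] using A_eq by (intro star_cos_cong) simp
    then show "f \<in> ?rhs" using root by blast
  next
    fix f assume "f \<in> ?rhs"
    then obtain c where f: "f = fscale c (star_cos n L \<mu> (\<lambda>j. 1 / cos (\<mu> * L j)))"
      and root: "c * \<mu> * (\<Sum>j<n. tan (\<mu> * L j)) = 0" by blast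
    have "vertex_conds n L \<mu> (\<lambda>j. c * (1 / cos (\<mu> * L j)))"
      using conds_iff root by blast
    then show "f \<in> {star_cos n L \<mu> A |A. vertex_conds n L \<mu> A}"
      unfolding f star_cos_scale[symmetric] by blast
  qed
qed

lemma multiplicity_sg_no_pole_root:
  assumes L_nonneg: "\<forall>j<n. 0 \<le> L j" and "0 < n"
    and no_pole: "\<forall>j<n. cos (\<mu> * L j) \<noteq> 0"
    and root: "(\<Sum>j<n. tan (\<mu> * L j)) = 0"
  shows "multiplicity_sg n L (\<mu>^2) = 1"
proof -
  have "star_cos n L \<mu> (\<lambda>j. 1 / cos (\<mu> * L j)) \<noteq> 0"
    using \<open>0 < n\<close> L_nonneg no_pole by (intro star_cos_nonzero[of 0]) auto
  then show ?thesis
    unfolding multiplicity_sg_def eigenspace_sg_no_pole[OF assms(1-3)] root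
    using dim_range_fscale by (simp add: full_SetCompr_eq)
qed

lemma is_eigenvalue_sg_no_pole_imp_root:
  assumes L_nonneg: "\<forall>j<n. 0 \<le> L j" and "0 < n"
    and no_pole: "\<forall>j<n. cos (\<mu> * L j) \<noteq> 0"
    and "\<mu> \<noteq> 0" and "is_eigenvalue_sg n L (\<mu>^2)"
  shows "(\<Sum>j<n. tan (\<mu> * L j)) = 0"
proof -
  obtain c where "fscale c (star_cos n L \<mu> (\<lambda>j. 1 / cos (\<mu> * L j))) \<noteq> 0"
    and "c * \<mu> * (\<Sum>j<n. tan (\<mu> * L j)) = 0"
    using assms(5) unfolding is_eigenvalue_sg_def eigenspace_sg_no_pole[OF assms(1-3)] by blast
  moreover from this(1) have "c \<noteq> 0" by (auto simp: fscale_def fun_eq_iff)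
  ultimately show ?thesis using \<open>\<mu> \<noteq> 0\<close> by simp
qed

lemma spec_pos_eq_sum_frequencies:
  assumes "0 < k" and "finite W" and W: "W \<subseteq> {0..<k}"
    and complete: "\<And>\<mu>. 0 \<le> \<mu> \<Longrightarrow> \<mu> < k \<Longrightarrow> is_eigenvalue_sg n L (\<mu>^2) \<Longrightarrow> \<mu> \<in> W"
  shows "spec_pos n L k = (\<Sum>\<mu>\<in>W. multiplicity_sg n L (\<mu>^2))"
proof -
  let ?E = "{lam. 0 \<le> lam \<and> lam < k^2 \<and> is_eigenvalue_sg n L lam}"
  have E_sub: "?E \<subseteq> (\<lambda>\<mu>. \<mu>^2) ` W"
  proof
    fix lam assume lam: "lam \<in> ?E"
    then have "sqrt lam < k" using \<open>0 < k\<close> real_sqrt_less_mono[of lam "k^2"] by simp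
    then have "sqrt lam \<in> W" using lam complete[of "sqrt lam"] by simp
    then show "lam \<in> (\<lambda>\<mu>. \<mu>^2) ` W" using lam by (intro image_eqI[of _ _ "sqrt lam"]) auto
  qed
  have "spec_pos n L k = (\<Sum>lam\<in>(\<lambda>\<mu>. \<mu>^2) ` W. multiplicity_sg n L lam)"
    unfolding spec_pos_def
  proof (rule sum.mono_neutral_left[OF _ E_sub])
    show "finite ((\<lambda>\<mu>. \<mu>^2) ` W)" using \<open>finite W\<close> by simp
    show "\<forall>lam\<in>(\<lambda>\<mu>. \<mu>^2) ` W - ?E. multiplicity_sg n L lam = 0"
    proof
      fix lam assume "lam \<in> (\<lambda>\<mu>. \<mu>^2) ` W - ?E"
      then obtain \<mu> where "\<mu> \<in> W" "lam = \<mu>^2" "lam \<notin> ?E" by blast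
      moreover from this(1) have "\<mu>^2 < k^2" using W by (auto intro!: power_strict_mono)
      ultimately show "multiplicity_sg n L lam = 0" by (auto intro!: multiplicity_sg_eq_0)
    qed
  qed
  also have "\<dots> = (\<Sum>\<mu>\<in>W. multiplicity_sg n L (\<mu>^2))"
  proof -
    have "inj_on (\<lambda>\<mu>. \<mu>^2) W"
    proof (rule inj_onI)
      fix x y assume "x \<in> W" "y \<in> W" "x^2 = y^2"
      moreover from this have "0 \<le> x" "0 \<le> y" using W by auto
      ultimately show "x = y" by simp
    qed
    then show ?thesis by (simp add: sum.reindex)
  qed
  finally show ?thesis .
qed

definition resonant_edges :: "nat \<Rightarrow> (nat \<Rightarrow> real) \<Rightarrow> real \<Rightarrow> nat set" where
  "resonant_edges n L \<mu> = {j. j < n \<and> cos (\<mu> * L j) = 0}"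

context
  fixes n :: nat and L :: "nat \<Rightarrow> real" and \<mu> :: real and j\<^sub>0 :: nat
  assumes L_nonneg: "\<forall>j<n. 0 \<le> L j" and mu_nonzero: "\<mu> \<noteq> 0"
    and sin_nonzero: "\<forall>j<n. sin (\<mu> * L j) \<noteq> 0"
    and resonant_j0: "j\<^sub>0 \<in> resonant_edges n L \<mu>"
begin

text \<open>At a pole the eigenspace is spanned by modes living on two resonant edges j and j0;
  the weights 1/sin balance the Kirchhoff condition.\<close>

definition pole_coeff :: "nat \<Rightarrow> nat \<Rightarrow> real" where
  "pole_coeff j i = (if i = j then 1 / sin (\<mu> * L i) else 0) - (if i = j\<^sub>0 then 1 / sin (\<mu> * L i) else 0)"

definition pole_mode :: "nat \<Rightarrow> nat \<Rightarrow> real \<Rightarrow> real" where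
  "pole_mode j = star_cos n L \<mu> (pole_coeff j)"

lemma pole_mode_leaf:
  "i < n \<Longrightarrow> i \<noteq> j\<^sub>0 \<Longrightarrow> pole_mode j i (L i) = (if i = j then 1 / sin (\<mu> * L i) else 0)"
  unfolding pole_mode_def using L_nonneg by (simp add: star_cos_leaf pole_coeff_def)

lemma pole_mode_in_eigenspace:
  assumes j: "j \<in> resonant_edges n L \<mu>"
  shows "pole_mode j \<in> eigenspace_sg n L (\<mu>^2)"
proof -
  have cos_term: "pole_coeff j i * cos (\<mu> * L i) = 0" for i
    using j resonant_j0 by (auto simp: pole_coeff_def resonant_edges_def)
  have "(\<Sum>i<n. pole_coeff j i * \<mu> * sin (\<mu> * L i)) =
        (\<Sum>i<n. (if i = j then \<mu> else 0) - (if i = j\<^sub>0 then \<mu> else 0))"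
    using sin_nonzero by (intro sum.cong) (auto simp: pole_coeff_def)
  also have "\<dots> = 0"
    using j resonant_j0 by (simp add: sum_subtractf resonant_edges_def)
  finally have "vertex_conds n L \<mu> (pole_coeff j)"
    unfolding vertex_conds_def cos_term by simp
  then show ?thesis
    unfolding eigenspace_sg_eq[OF L_nonneg] pole_mode_def by blast
qed

lemma eigenspace_sg_pole_subset_span:
  "eigenspace_sg n L (\<mu>^2) \<subseteq> vs.span (pole_mode ` (resonant_edges n L \<mu> - {j\<^sub>0}))"
  unfolding eigenspace_sg_eq[OF L_nonneg]
proof
  fix f assume "f \<in> {star_cos n L \<mu> A |A. vertex_conds n L \<mu> A}"
  then obtain A where f: "f = star_cos n L \<mu> A" and conds: "vertex_conds n L \<mu> A" by blast
  define R where "R = resonant_edges n L \<mu>"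
  define s where "s i = sin (\<mu> * L i)" for i
  have R: "finite R" "R \<subseteq> {..<n}" "j\<^sub>0 \<in> R" using resonant_j0 by (auto simp: R_def resonant_edges_def)
  have j0_n: "j\<^sub>0 < n" and cos_j0: "cos (\<mu> * L j\<^sub>0) = 0"
    using resonant_j0 by (auto simp: resonant_edges_def)
  have A_off: "A i = 0" if "i < n" "i \<notin> R" for i
  proof -
    have "A i * cos (\<mu> * L i) = A j\<^sub>0 * cos (\<mu> * L j\<^sub>0)"
      using conds that(1) j0_n unfolding vertex_conds_def by blast
    moreover have "cos (\<mu> * L i) \<noteq> 0" using that by (simp add: R_def resonant_edges_def)
    ultimately show ?thesis using cos_j0 by simp
  qed
  have "\<mu> * (\<Sum>i<n. A i * s i) = (\<Sum>i<n. A i * \<mu> * sin (\<mu> * L i))"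
    by (simp add: sum_distrib_left s_def mult_ac)
  also have "\<dots> = 0" using conds unfolding vertex_conds_def by blast
  finally have "\<mu> * (\<Sum>i<n. A i * s i) = 0" .
  moreover have "(\<Sum>i<n. A i * s i) = (\<Sum>i\<in>R. A i * s i)"
    using R A_off by (intro sum.mono_neutral_right) auto
  ultimately have "(\<Sum>i\<in>R. A i * s i) = 0" using mu_nonzero by simp
  then have balance: "(\<Sum>j\<in>R - {j\<^sub>0}. A j * s j) = - (A j\<^sub>0 * s j\<^sub>0)"
    using R by (simp add: sum.remove)
  have coeffs: "(\<Sum>j\<in>R - {j\<^sub>0}. A j * s j * pole_coeff j i) = A i" if "i < n" for i
  proof (cases "i = j\<^sub>0")
    case True
    then have "(\<Sum>j\<in>R - {j\<^sub>0}. A j * s j * pole_coeff j i) = - (\<Sum>j\<in>R - {j\<^sub>0}. A j * s j) / s j\<^sub>0"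
      by (simp add: pole_coeff_def s_def sum_negf sum_divide_distrib)
    then show ?thesis using True balance sin_nonzero that by (simp add: s_def)
  next
    case False
    have "(\<Sum>j\<in>R - {j\<^sub>0}. A j * s j * pole_coeff j i) = (\<Sum>j\<in>R - {j\<^sub>0}. if j = i then A i else 0)"
      using False sin_nonzero that by (intro sum.cong) (auto simp: pole_coeff_def s_def)
    also have "\<dots> = A i"
      using R A_off that False by auto
    finally show ?thesis .
  qed
  have "f = (\<Sum>j\<in>R - {j\<^sub>0}. fscale (A j * s j) (pole_mode j))"
    unfolding f pole_mode_def star_cos_scale[symmetric] star_cos_sum[symmetric]
    using coeffs by (intro star_cos_cong) (simp add: mult.assoc)
  also have "\<dots> \<in> vs.span (pole_mode ` (R - {j\<^sub>0}))"
    by (intro vs.span_sum vs.span_scale vs.span_base) auto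
  finally show "f \<in> vs.span (pole_mode ` (resonant_edges n L \<mu> - {j\<^sub>0}))" unfolding R_def .
qed

lemma inj_on_pole_mode: "inj_on pole_mode (resonant_edges n L \<mu> - {j\<^sub>0})"
proof (rule inj_onI)
  fix i j assume i: "i \<in> resonant_edges n L \<mu> - {j\<^sub>0}" and j: "j \<in> resonant_edges n L \<mu> - {j\<^sub>0}"
    and "pole_mode i = pole_mode j"
  then have "pole_mode i i (L i) = pole_mode j i (L i)" by simp
  then show "i = j"
    using i pole_mode_leaf[of i i] pole_mode_leaf[of i j] sin_nonzero
    by (auto simp: resonant_edges_def split: if_splits)
qed

lemma pole_modes_independent: "vs.independent (pole_mode ` (resonant_edges n L \<mu> - {j\<^sub>0}))"
proof
  define B where "B = pole_mode ` (resonant_edges n L \<mu> - {j\<^sub>0})"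
  assume "vs.dependent (pole_mode ` (resonant_edges n L \<mu> - {j\<^sub>0}))"
  then have "vs.dependent B" by (simp add: B_def)
  moreover have "finite B" by (simp add: B_def resonant_edges_def)
  ultimately have "\<exists>u. (\<exists>v\<in>B. u v \<noteq> 0) \<and> (\<Sum>v\<in>B. fscale (u v) v) = 0"
    by (simp add: vs.dependent_finite)
  then obtain u where "(\<exists>v\<in>B. u v \<noteq> 0) \<and> (\<Sum>v\<in>B. fscale (u v) v) = 0" ..
  then have u: "\<exists>v\<in>B. u v \<noteq> 0" and sum_0: "(\<Sum>v\<in>B. fscale (u v) v) = 0" by auto
  have "u (pole_mode i) = 0" if i: "i \<in> resonant_edges n L \<mu> - {j\<^sub>0}" for i
  proof -
    have i_n: "i < n" using i by (simp add: resonant_edges_def)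
    have "0 = (\<Sum>v\<in>B. fscale (u v) v) i (L i)" using sum_0 by simp
    also have "\<dots> = (\<Sum>j\<in>resonant_edges n L \<mu> - {j\<^sub>0}. u (pole_mode j) * pole_mode j i (L i))"
      unfolding B_def using sum.reindex[OF inj_on_pole_mode, of "\<lambda>v. u v * v i (L i)"]
      by (simp add: sum_apply2 fscale_def)
    also have "\<dots> = (\<Sum>j\<in>resonant_edges n L \<mu> - {j\<^sub>0}. if i = j then u (pole_mode j) / sin (\<mu> * L i) else 0)"
      using i i_n by (intro sum.cong) (auto simp: pole_mode_leaf)
    also have "\<dots> = u (pole_mode i) / sin (\<mu> * L i)"
      using i by (simp add: resonant_edges_def)
    finally show ?thesis using sin_nonzero i_n by simp
  qed
  then show False using u unfolding B_def by auto
qed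

lemma multiplicity_sg_pole: "multiplicity_sg n L (\<mu>^2) = card (resonant_edges n L \<mu>) - 1"
  unfolding multiplicity_sg_def
proof (rule vs.dim_unique)
  show "pole_mode ` (resonant_edges n L \<mu> - {j\<^sub>0}) \<subseteq> eigenspace_sg n L (\<mu>^2)"
    using pole_mode_in_eigenspace by blast
  show "eigenspace_sg n L (\<mu>^2) \<subseteq> vs.span (pole_mode ` (resonant_edges n L \<mu> - {j\<^sub>0}))"
    by (rule eigenspace_sg_pole_subset_span)
  show "vs.independent (pole_mode ` (resonant_edges n L \<mu> - {j\<^sub>0}))"
    by (rule pole_modes_independent)
  have "card (pole_mode ` (resonant_edges n L \<mu> - {j\<^sub>0})) = card (resonant_edges n L \<mu> - {j\<^sub>0})"
    by (rule card_image[OF inj_on_pole_mode])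
  also have "\<dots> = card (resonant_edges n L \<mu>) - 1"
    using resonant_j0 by (rule card_Diff_singleton)
  finally show "card (pole_mode ` (resonant_edges n L \<mu> - {j\<^sub>0})) = card (resonant_edges n L \<mu>) - 1" .
qed

end

section \<open>The secular function\<close>

lemma cos_eq_0_iff_pi_half:
  assumes "0 < x" "x < pi"
  shows "cos x = 0 \<longleftrightarrow> x = pi/2"
proof
  assume "cos x = 0"
  then show "x = pi/2" using assms cos_inj_pi[of x "pi/2"] by simp
next
  assume x: "x = pi/2"
  show "cos x = 0" unfolding x by simp
qed

lemma tan_less_tan_same_branch:
  assumes "0 \<le> x" "x < y" "y < pi" "y < pi/2 \<or> pi/2 < x"
  shows "tan x < tan y"
  using assms(4)
proof
  assume "y < pi/2"
  then show ?thesis using assms by (intro tan_monotone) auto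
next
  assume "pi/2 < x"
  then have "tan (x - pi) < tan (y - pi)" using assms by (intro tan_monotone) auto
  then show ?thesis using tan_periodic_pi[of "x - pi"] tan_periodic_pi[of "y - pi"] by simp
qed

lemma filterlim_tan_scaled_at_left:
  assumes "0 < c"
  shows "filterlim (\<lambda>\<mu>. tan (\<mu> * c)) at_top (at_left (pi / (2 * c)))"
proof (rule filterlim_compose[OF filterlim_tan_at_left])
  have "((\<lambda>\<mu>. \<mu> * c) \<longlongrightarrow> pi / (2 * c) * c) (at_left (pi / (2 * c)))"
    by (intro tendsto_intros)
  moreover have "eventually (\<lambda>\<mu>. \<mu> * c < pi / 2) (at_left (pi / (2 * c)))"
  proof (rule eventually_at_leftI)
    fix \<mu> assume "\<mu> \<in> {0<..<pi / (2 * c)}"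
    then show "\<mu> * c < pi / 2" using assms by (simp add: field_simps)
  qed (use assms in simp)
  ultimately show "filterlim (\<lambda>\<mu>. \<mu> * c) (at_left (pi / 2)) (at_left (pi / (2 * c)))"
    using assms by (intro tendsto_imp_filterlim_at_left) auto
qed

lemma filterlim_tan_scaled_at_right:
  assumes "0 < c"
  shows "filterlim (\<lambda>\<mu>. tan (\<mu> * c)) at_bot (at_right (pi / (2 * c)))"
proof -
  have "((\<lambda>\<mu>. \<mu> * c - pi) \<longlongrightarrow> pi / (2 * c) * c - pi) (at_right (pi / (2 * c)))"
    by (intro tendsto_intros)
  moreover have "eventually (\<lambda>\<mu>. - (pi / 2) < \<mu> * c - pi) (at_right (pi / (2 * c)))"
  proof (rule eventually_at_rightI)
    fix \<mu> assume "\<mu> \<in> {pi / (2 * c)<..<pi / c}"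
    then show "- (pi / 2) < \<mu> * c - pi" using assms by (simp add: field_simps)
  qed (use assms in \<open>simp add: field_simps\<close>)
  ultimately have "filterlim (\<lambda>\<mu>. \<mu> * c - pi) (at_right (- (pi / 2))) (at_right (pi / (2 * c)))"
    using assms by (intro tendsto_imp_filterlim_at_right) auto
  then have "filterlim (\<lambda>\<mu>. tan (\<mu> * c - pi)) at_bot (at_right (pi / (2 * c)))"
    by (rule filterlim_compose[OF filterlim_tan_at_right])
  moreover have "tan (\<mu> * c - pi) = tan (\<mu> * c)" for \<mu>
    using tan_periodic_pi[of "\<mu> * c - pi"] by simp
  ultimately show ?thesis by simp
qed

lemma eventually_at_right_obtain_below:
  fixes q p :: real
  assumes "eventually P (at_right q)" "q < p"
  obtains a where "q < a" "a < p" "P a"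
proof -
  obtain b where "q < b" and b: "\<And>y. q < y \<Longrightarrow> y < b \<Longrightarrow> P y"
    using assms(1) unfolding eventually_at_right_field by blast
  then show ?thesis using that[of "(q + min b p) / 2"] assms(2) by auto
qed

lemma eventually_at_left_obtain_above:
  fixes q p :: real
  assumes "eventually P (at_left p)" "q < p"
  obtains b where "q < b" "b < p" "P b"
proof -
  obtain a where "a < p" and a: "\<And>y. a < y \<Longrightarrow> y < p \<Longrightarrow> P y"
    using assms(1) unfolding eventually_at_left_field by blast
  then show ?thesis using that[of "(max a q + p) / 2"] assms(2) by auto
qed

text \<open>These are exactly the star graphs carrying a generic eigenfunction with eigenvalue k^2
  and no Neumann points: every edge is shorter than half a wavelength and is not a quarter
  wavelength long, and k is a root of the secular function sum_j tan (mu * L j).\<close>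

locale secular_root_star =
  fixes n :: nat and L :: "nat \<Rightarrow> real" and k :: real
  assumes star: "star_graph n L" and k_pos: "0 < k"
    and edges_short: "\<forall>j<n. k * L j < pi"
    and cos_nonzero: "\<forall>j<n. cos (k * L j) \<noteq> 0"
    and secular_root: "(\<Sum>j<n. tan (k * L j)) = 0"
begin

lemma n_pos: "0 < n"
  using star by (simp add: star_graph_def)

lemma L_pos: "j < n \<Longrightarrow> 0 < L j"
  using star by (simp add: star_graph_def)

lemma L_nonneg: "\<forall>j<n. 0 \<le> L j"
  using L_pos by (simp add: less_imp_le)

lemma angle_bounds:
  assumes "0 < \<mu>" "\<mu> \<le> k" "j < n"
  shows "0 < \<mu> * L j" and "\<mu> * L j < pi"
proof -
  show "0 < \<mu> * L j" using assms L_pos by simp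
  have "\<mu> * L j \<le> k * L j" using assms L_pos[of j] by (intro mult_right_mono) auto
  then show "\<mu> * L j < pi" using edges_short assms(3) by force
qed

definition secular :: "real \<Rightarrow> real" where
  "secular \<mu> = (\<Sum>j<n. tan (\<mu> * L j))"

definition pole :: "nat \<Rightarrow> real" where
  "pole j = pi / (2 * L j)"

definition long_edges :: "nat set" where
  "long_edges = {j. j < n \<and> pi/2 < k * L j}"

definition poles :: "real set" where
  "poles = pole ` long_edges"

definition secular_zeros :: "real set" where
  "secular_zeros = {\<mu>. 0 < \<mu> \<and> \<mu> < k \<and> \<mu> \<notin> poles \<and> secular \<mu> = 0}"

lemma pole_less_iff: "j < n \<Longrightarrow> pole j < \<mu> \<longleftrightarrow> pi/2 < \<mu> * L j"
  using L_pos[of j] by (simp add: pole_def field_simps)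

lemma less_pole_iff: "j < n \<Longrightarrow> \<mu> < pole j \<longleftrightarrow> \<mu> * L j < pi/2"
  using L_pos[of j] by (simp add: pole_def field_simps)

lemma pole_eq_iff: "j < n \<Longrightarrow> pole j = \<mu> \<longleftrightarrow> \<mu> * L j = pi/2"
  using L_pos[of j] by (auto simp: pole_def field_simps)

lemma not_quarter_wave:
  assumes "j < n"
  shows "k * L j \<noteq> pi/2"
proof
  assume quarter: "k * L j = pi/2"
  have "cos (k * L j) = 0" unfolding quarter by simp
  then show False using cos_nonzero assms by blast
qed

lemma short_edge_below_quarter:
  assumes "j < n" "j \<notin> long_edges"
  shows "k * L j < pi/2"
  using not_quarter_wave[OF assms(1)] assms unfolding long_edges_def by auto

lemma finite_poles: "finite poles"
  unfolding poles_def long_edges_def by simp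

lemma poles_bounds: "p \<in> poles \<Longrightarrow> 0 < p \<and> p < k"
  unfolding poles_def long_edges_def using L_pos pole_less_iff by (auto simp: pole_def)

lemma resonant_edges_eq:
  assumes "0 < \<mu>" "\<mu> < k"
  shows "resonant_edges n L \<mu> = {j \<in> long_edges. pole j = \<mu>}"
proof -
  have "cos (\<mu> * L j) = 0 \<longleftrightarrow> pole j = \<mu>" if "j < n" for j
    using cos_eq_0_iff_pi_half angle_bounds[of \<mu> j] pole_eq_iff[of j \<mu>] assms that by simp
  moreover have "pi/2 < k * L j" if "j < n" "pole j = \<mu>" for j
    using pole_less_iff[of j k] assms that by simp
  ultimately show ?thesis unfolding resonant_edges_def long_edges_def by auto
qed

lemma mem_poles_iff: "0 < \<mu> \<Longrightarrow> \<mu> < k \<Longrightarrow> \<mu> \<in> poles \<longleftrightarrow> resonant_edges n L \<mu> \<noteq> {}"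
  using resonant_edges_eq unfolding poles_def by auto

lemma cos_nonzero_off_poles:
  "0 < \<mu> \<Longrightarrow> \<mu> < k \<Longrightarrow> \<mu> \<notin> poles \<Longrightarrow> \<forall>j<n. cos (\<mu> * L j) \<noteq> 0"
  using mem_poles_iff unfolding resonant_edges_def by auto

lemma poles_nonempty: "poles \<noteq> {}"
proof
  assume "poles = {}"
  then have "k * L j < pi/2" if "j < n" for j
    using short_edge_below_quarter that unfolding poles_def by auto
  then have "0 < (\<Sum>j<n. tan (k * L j))"
    using n_pos angle_bounds(1)[of k] k_pos by (intro sum_pos tan_gt_zero) auto
  then show False using secular_root by simp
qed

lemma secular_strict_mono:
  assumes "0 \<le> a" "a < b" "b \<le> k" "\<forall>p\<in>poles. p < a \<or> b < p"
  shows "secular a < secular b"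
  unfolding secular_def
proof (rule sum_strict_mono)
  fix j assume "j \<in> {..<n}"
  then have j: "j < n" by simp
  have "b * L j < pi/2 \<or> pi/2 < a * L j"
  proof (cases "j \<in> long_edges")
    case True
    then have "pole j < a \<or> b < pole j" using assms(4) unfolding poles_def by blast
    then show ?thesis using pole_less_iff[OF j] less_pole_iff[OF j] by auto
  next
    case False
    have "b * L j \<le> k * L j" using assms L_pos[OF j] by (intro mult_right_mono) auto
    then show ?thesis using short_edge_below_quarter[OF j False] by auto
  qed
  moreover have "0 \<le> a * L j" "a * L j < b * L j" using assms L_pos[OF j] by auto
  moreover have "b * L j < pi" using angle_bounds(2)[of b j] assms j by auto
  ultimately show "tan (a * L j) < tan (b * L j)" by (intro tan_less_tan_same_branch) auto
qed (use n_pos in auto)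

lemma secular_pos_below_poles:
  assumes "0 < \<mu>" "\<mu> < Min poles"
  shows "0 < secular \<mu>"
proof -
  have "Min poles < k" using poles_bounds Min_in[OF finite_poles poles_nonempty] by auto
  then have "secular 0 < secular \<mu>"
    using assms Min_le[OF finite_poles] by (intro secular_strict_mono) force+
  then show ?thesis by (simp add: secular_def)
qed

lemma secular_neg_above_poles:
  assumes "Max poles < \<mu>" "\<mu> < k"
  shows "secular \<mu> < 0"
proof -
  have "0 < \<mu>" using assms poles_bounds Max_in[OF finite_poles poles_nonempty] by force
  then have "secular \<mu> < secular k"
    using assms Max_ge[OF finite_poles] by (intro secular_strict_mono) force+
  then show ?thesis using secular_root by (simp add: secular_def)
qed

lemma isCont_secular: "0 < \<mu> \<Longrightarrow> \<mu> < k \<Longrightarrow> \<mu> \<notin> poles \<Longrightarrow> isCont secular \<mu>"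
  unfolding secular_def[abs_def] by (intro continuous_intros) (use cos_nonzero_off_poles in auto)

lemma secular_near_pole:
  assumes "p \<in> poles"
  obtains r m where "isCont r p" "0 < m" "secular = (\<lambda>\<mu>. r \<mu> + m * tan (\<mu> * (pi / (2 * p))))"
proof -
  define R where "R = resonant_edges n L p"
  have p: "0 < p" "p < k" using poles_bounds assms by auto
  have R_sub: "R \<subseteq> {..<n}" by (auto simp: R_def resonant_edges_def)
  then have R: "R \<subseteq> {..<n}" "R \<noteq> {}" "finite R"
    using mem_poles_iff[OF p] assms finite_subset by (auto simp: R_def)
  have L_R: "L j = pi / (2 * p)" if "j \<in> R" for j
  proof -
    have j: "j < n" "pole j = p" using that resonant_edges_eq[OF p] unfolding R_def long_edges_def by auto
    then show ?thesis using L_pos[OF j(1)] p(1) unfolding pole_def by (auto simp: field_simps)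
  qed
  have "secular \<mu> = (\<Sum>j\<in>{..<n} - R. tan (\<mu> * L j)) + real (card R) * tan (\<mu> * (pi / (2 * p)))" for \<mu>
  proof -
    have "secular \<mu> = (\<Sum>j\<in>{..<n} - R. tan (\<mu> * L j)) + (\<Sum>j\<in>R. tan (\<mu> * L j))"
      unfolding secular_def using R(1) by (rule sum.subset_diff) simp
    also have "(\<Sum>j\<in>R. tan (\<mu> * L j)) = (\<Sum>j\<in>R. tan (\<mu> * (pi / (2 * p))))"
      using L_R by (intro sum.cong) auto
    finally show ?thesis by simp
  qed
  moreover have "isCont (\<lambda>\<mu>. \<Sum>j\<in>{..<n} - R. tan (\<mu> * L j)) p"
    by (intro continuous_intros) (auto simp: R_def resonant_edges_def)
  moreover have "0 < real (card R)" using R by (simp add: card_gt_0_iff)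
  ultimately show ?thesis using that by blast
qed

lemma filterlim_secular_at_left_pole:
  assumes "p \<in> poles"
  shows "filterlim secular at_top (at_left p)"
proof -
  obtain r m where r: "isCont r p" and "0 < m"
    and secular_eq: "secular = (\<lambda>\<mu>. r \<mu> + m * tan (\<mu> * (pi / (2 * p))))"
    using secular_near_pole[OF assms] by blast
  have "0 < p" using poles_bounds assms by auto
  then have "filterlim (\<lambda>\<mu>. tan (\<mu> * (pi / (2 * p)))) at_top (at_left p)"
    using filterlim_tan_scaled_at_left[of "pi / (2 * p)"] by simp
  moreover have "(r \<longlongrightarrow> r p) (at_left p)"
    using continuous_at_imp_continuous_at_within[OF r] unfolding continuous_within .
  ultimately show ?thesis unfolding secular_eq using \<open>0 < m\<close>
    by (intro filterlim_tendsto_add_at_top filterlim_tendsto_pos_mult_at_top[OF tendsto_const])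
qed

lemma filterlim_secular_at_right_pole:
  assumes "p \<in> poles"
  shows "filterlim secular at_bot (at_right p)"
proof -
  obtain r m where r: "isCont r p" and "0 < m"
    and secular_eq: "secular = (\<lambda>\<mu>. r \<mu> + m * tan (\<mu> * (pi / (2 * p))))"
    using secular_near_pole[OF assms] by blast
  have "0 < p" using poles_bounds assms by auto
  then have "filterlim (\<lambda>\<mu>. tan (\<mu> * (pi / (2 * p)))) at_bot (at_right p)"
    using filterlim_tan_scaled_at_right[of "pi / (2 * p)"] by simp
  then have "filterlim (\<lambda>\<mu>. m * tan (\<mu> * (pi / (2 * p)))) at_bot (at_right p)"
    using \<open>0 < m\<close> by (intro filterlim_tendsto_pos_mult_at_bot[OF tendsto_const])
  moreover have "(r \<longlongrightarrow> r p) (at_right p)"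
    using continuous_at_imp_continuous_at_within[OF r] unfolding continuous_within .
  ultimately show ?thesis
    unfolding secular_eq by (subst filterlim_tendsto_add_at_bot_iff)
qed

lemma secular_zero_between_poles:
  assumes q: "q \<in> poles" and p: "p \<in> poles" and "q < p"
    and no_pole_between: "\<forall>r\<in>poles. r \<le> q \<or> p \<le> r"
  obtains z where "q < z" "z < p" "secular z = 0"
proof -
  obtain a where a: "q < a" "a < p" "secular a < 0"
    using filterlim_secular_at_right_pole[OF q] \<open>q < p\<close>
    unfolding filterlim_at_bot_dense by (metis eventually_at_right_obtain_below)
  obtain b where b: "a < b" "b < p" "0 < secular b"
    using filterlim_secular_at_left_pole[OF p] \<open>a < p\<close>
    unfolding filterlim_at_top_dense by (metis eventually_at_left_obtain_above)
  have "continuous_on {a..b} secular"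
  proof (intro continuous_at_imp_continuous_on ballI isCont_secular)
    fix \<mu> assume "\<mu> \<in> {a..b}"
    then show "0 < \<mu>" "\<mu> < k" "\<mu> \<notin> poles"
      using a b q p poles_bounds no_pole_between by force+
  qed
  then obtain z where "a \<le> z" "z \<le> b" "secular z = 0"
    using IVT'[of secular a 0 b] a b by force
  then show ?thesis using a b by (intro that[of z]) auto
qed

text \<open>Every zero of the secular function below k is followed by a pole other than the first one,
  and this matches zeros and non-minimal poles one to one.\<close>

definition next_pole :: "real \<Rightarrow> real" where
  "next_pole z = Min {p \<in> poles. z < p}"

lemma next_pole:
  assumes z: "z \<in> secular_zeros"
  shows "next_pole z \<in> poles" and "z < next_pole z" and "next_pole z \<noteq> Min poles"
    and "\<And>r. r \<in> poles \<Longrightarrow> z < r \<Longrightarrow> next_pole z \<le> r"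
proof -
  have z_props: "0 < z" "z < k" "z \<notin> poles" "secular z = 0" using z unfolding secular_zeros_def by auto
  have fin: "finite {p \<in> poles. z < p}" using finite_poles by simp
  have "{p \<in> poles. z < p} \<noteq> {}"
  proof
    assume "{p \<in> poles. z < p} = {}"
    then have "Max poles < z"
      using Max_in[OF finite_poles poles_nonempty] z_props(3) by (metis (mono_tags) empty_Collect_eq linorder_neqE)
    then show False using secular_neg_above_poles[of z] z_props by linarith
  qed
  then have "next_pole z \<in> {p \<in> poles. z < p}" unfolding next_pole_def using Min_in[OF fin] by blast
  then show "next_pole z \<in> poles" and less: "z < next_pole z" by auto
  show "\<And>r. r \<in> poles \<Longrightarrow> z < r \<Longrightarrow> next_pole z \<le> r" unfolding next_pole_def using fin by simp
  show "next_pole z \<noteq> Min poles"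
  proof
    assume "next_pole z = Min poles"
    then have "z < Min poles" using less by simp
    then have "0 < secular z" using secular_pos_below_poles z_props(1) by blast
    then show False using z_props(4) by simp
  qed
qed

lemma inj_on_next_pole: "inj_on next_pole secular_zeros"
proof -
  have False if z: "z1 \<in> secular_zeros" "z2 \<in> secular_zeros" "z1 < z2" "next_pole z1 = next_pole z2" for z1 z2
  proof -
    have "\<forall>r\<in>poles. r < z1 \<or> z2 < r"
    proof (intro ballI)
      fix r assume r: "r \<in> poles"
      have "z1 \<noteq> r" using z(1) r unfolding secular_zeros_def by auto
      moreover have "z1 < r \<Longrightarrow> z2 < r" using next_pole(4)[OF z(1) r] next_pole(2)[OF z(2)] z(4) by simp
      ultimately show "r < z1 \<or> z2 < r" by linarith
    qed
    then have "secular z1 < secular z2"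
      using z unfolding secular_zeros_def by (intro secular_strict_mono) auto
    then show False using z unfolding secular_zeros_def by simp
  qed
  then show ?thesis by (metis inj_onI linorder_neqE)
qed

lemma next_pole_image: "next_pole ` secular_zeros = poles - {Min poles}"
proof
  show "next_pole ` secular_zeros \<subseteq> poles - {Min poles}" using next_pole by auto
next
  show "poles - {Min poles} \<subseteq> next_pole ` secular_zeros"
  proof
    fix p assume p: "p \<in> poles - {Min poles}"
    then have "Min poles < p" using Min_le[OF finite_poles] by force
    define q where "q = Max {r \<in> poles. r < p}"
    have fin: "finite {r \<in> poles. r < p}" using finite_poles by simp
    have "{r \<in> poles. r < p} \<noteq> {}" using Min_in[OF finite_poles poles_nonempty] \<open>Min poles < p\<close> by blast
    then have q: "q \<in> poles" "q < p" using Max_in[OF fin] unfolding q_def by auto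
    have no_pole_between: "\<forall>r\<in>poles. r \<le> q \<or> p \<le> r"
      using Max_ge[OF fin] unfolding q_def by force
    obtain z where z: "q < z" "z < p" "secular z = 0"
      using secular_zero_between_poles[OF q(1) _ q(2) no_pole_between] p by blast
    have "z \<in> secular_zeros"
      using z q p poles_bounds no_pole_between unfolding secular_zeros_def by force
    moreover have "next_pole z = p"
      using next_pole[OF \<open>z \<in> secular_zeros\<close>] z p no_pole_between by force
    ultimately show "p \<in> next_pole ` secular_zeros" by force
  qed
qed

lemma card_secular_zeros: "finite secular_zeros" "card secular_zeros = card poles - 1"
proof -
  have bij: "bij_betw next_pole secular_zeros (poles - {Min poles})"
    unfolding bij_betw_def using inj_on_next_pole next_pole_image by simp
  then show "finite secular_zeros" using bij_betw_finite finite_poles by blast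
  show "card secular_zeros = card poles - 1"
    using bij_betw_same_card[OF bij] Min_in[OF finite_poles poles_nonempty] finite_poles by simp
qed

lemma sum_card_resonant_edges: "(\<Sum>p\<in>poles. card (resonant_edges n L p)) = card long_edges"
proof -
  have "card long_edges = (\<Sum>p\<in>pole ` long_edges. card {j \<in> long_edges. pole j = p})"
    using card_eq_sum sum.image_gen[of long_edges "\<lambda>_. 1::nat" pole]
    by (simp add: long_edges_def)
  also have "\<dots> = (\<Sum>p\<in>poles. card (resonant_edges n L p))"
    unfolding poles_def using resonant_edges_eq poles_bounds poles_def by (intro sum.cong) auto
  finally show ?thesis by simp
qed

lemma eigenfrequency_cases:
  assumes "0 < \<mu>" "\<mu> < k" "is_eigenvalue_sg n L (\<mu>^2)"
  shows "\<mu> \<in> poles \<or> \<mu> \<in> secular_zeros"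
  using is_eigenvalue_sg_no_pole_imp_root[OF L_nonneg n_pos cos_nonzero_off_poles] assms
  unfolding secular_zeros_def secular_def by auto

lemma multiplicity_sg_zero: "multiplicity_sg n L 0 = 1"
  using multiplicity_sg_no_pole_root[OF L_nonneg n_pos, of 0] by simp

lemma multiplicity_sg_at_pole:
  assumes p: "p \<in> poles"
  shows "multiplicity_sg n L (p^2) = card (resonant_edges n L p) - 1"
proof -
  obtain j\<^sub>0 where j\<^sub>0: "j\<^sub>0 \<in> resonant_edges n L p" using mem_poles_iff poles_bounds p by blast
  have p_bounds: "0 < p" "p < k" using poles_bounds[OF p] by auto
  have sin_nonzero: "\<forall>j<n. sin (p * L j) \<noteq> 0"
  proof (intro allI impI)
    fix j assume "j < n"
    then have "0 < sin (p * L j)" using angle_bounds[of p j] p_bounds by (intro sin_gt_zero) auto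
    then show "sin (p * L j) \<noteq> 0" by simp
  qed
  have "p \<noteq> 0" using p_bounds by simp
  then show ?thesis by (rule multiplicity_sg_pole[OF L_nonneg _ sin_nonzero j\<^sub>0])
qed

lemma multiplicity_sg_at_secular_zero:
  assumes "z \<in> secular_zeros"
  shows "multiplicity_sg n L (z^2) = 1"
  using assms cos_nonzero_off_poles L_nonneg n_pos
  by (intro multiplicity_sg_no_pole_root) (auto simp: secular_zeros_def secular_def)

lemma card_long_edges_count:
  "card long_edges = 1 + (\<Sum>p\<in>poles. card (resonant_edges n L p) - 1) + card secular_zeros"
proof -
  have "(\<Sum>p\<in>poles. card (resonant_edges n L p) - 1) + card poles =
      (\<Sum>p\<in>poles. card (resonant_edges n L p) - 1 + 1)"
    unfolding sum.distrib by simp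
  also have "\<dots> = (\<Sum>p\<in>poles. card (resonant_edges n L p))"
  proof (rule sum.cong)
    fix p assume "p \<in> poles"
    then have "resonant_edges n L p \<noteq> {}" using mem_poles_iff poles_bounds by blast
    then have "1 \<le> card (resonant_edges n L p)"
      by (simp add: Suc_le_eq card_gt_0_iff resonant_edges_def)
    then show "card (resonant_edges n L p) - 1 + 1 = card (resonant_edges n L p)" by linarith
  qed simp
  also have "\<dots> = card long_edges" by (rule sum_card_resonant_edges)
  finally have "(\<Sum>p\<in>poles. card (resonant_edges n L p) - 1) + card poles = card long_edges" .
  moreover have "1 \<le> card poles" using poles_nonempty finite_poles by (simp add: Suc_le_eq card_gt_0_iff)
  ultimately show ?thesis using card_secular_zeros(2) by simp
qed

theorem spec_pos_eq_card_long_edges: "spec_pos n L k = card {j. j < n \<and> pi/2 < k * L j}"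
proof -
  have "spec_pos n L k = (\<Sum>\<mu>\<in>insert 0 (poles \<union> secular_zeros). multiplicity_sg n L (\<mu>^2))"
    using k_pos finite_poles card_secular_zeros(1) poles_bounds eigenfrequency_cases
    by (intro spec_pos_eq_sum_frequencies) (auto simp: secular_zeros_def less_eq_real_def)
  also have "\<dots> = multiplicity_sg n L 0 + (\<Sum>p\<in>poles. multiplicity_sg n L (p^2))
      + (\<Sum>z\<in>secular_zeros. multiplicity_sg n L (z^2))"
  proof -
    have "0 \<notin> poles \<union> secular_zeros" using poles_bounds by (auto simp: secular_zeros_def)
    moreover have "poles \<inter> secular_zeros = {}" by (auto simp: secular_zeros_def)
    ultimately show ?thesis using finite_poles card_secular_zeros(1) by (simp add: sum.union_disjoint)
  qed
  also have "\<dots> = 1 + (\<Sum>p\<in>poles. card (resonant_edges n L p) - 1) + card secular_zeros"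
    by (simp add: multiplicity_sg_zero multiplicity_sg_at_pole multiplicity_sg_at_secular_zero)
  also have "\<dots> = card long_edges" by (rule card_long_edges_count[symmetric])
  finally show ?thesis unfolding long_edges_def .
qed

end

section \<open>The reflected star graph\<close>

lemma short_edge_of_sin_nonzero:
  assumes "0 < k" and "\<forall>x\<in>{0..<l}. sin (k * (l - x)) \<noteq> 0"
  shows "k * l < pi"
proof (rule ccontr)
  assume "\<not> k * l < pi"
  then have "l - pi / k \<in> {0..<l}" using assms(1) by (auto simp: field_simps)
  moreover have "sin (k * (l - (l - pi / k))) = 0" using assms(1) by simp
  ultimately show False using assms(2) by blast
qed

lemma generic_no_neumann_imp_secular_root_star:
  assumes star: "star_graph n L" and k: "0 < k"
    and generic: "generic_sg n L (k^2) f" and no_neumann: "no_neumann_points n L (k^2) f"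
  shows "secular_root_star n L k"
proof -
  have L_nonneg: "\<forall>j<n. 0 \<le> L j" and "0 < n" using star by (auto simp: star_graph_def less_imp_le)
  obtain df where sol: "eig_sol n L (k^2) f df" and no_crit: "\<forall>j<n. \<forall>x\<in>{0<..<L j}. df j x \<noteq> 0"
    using no_neumann unfolding no_neumann_points_def by blast
  obtain df' where sol': "eig_sol n L (k^2) f df'" and centre_slope: "\<forall>j<n. df' j 0 \<noteq> 0"
    and vertex_values: "\<forall>j<n. f j 0 \<noteq> 0 \<and> f j (L j) \<noteq> 0"
    using generic unfolding generic_sg_def by blast
  define A where "A = (\<lambda>j. f j (L j))"
  have "f = star_cos n L k A" unfolding A_def by (rule eig_sol_imp_star_cos(1)[OF L_nonneg sol])
  then have cos_nonzero: "\<forall>j<n. cos (k * L j) \<noteq> 0"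
    using vertex_values L_nonneg by (auto simp: star_cos_centre)
  have "k * L j < pi" if j: "j < n" for j
  proof (rule short_edge_of_sin_nonzero[OF k], intro ballI)
    fix x assume x: "x \<in> {0..<L j}"
    have slope: "df j x = A j * k * sin (k * (L j - x))" "df' j x = A j * k * sin (k * (L j - x))"
      using eig_sol_imp_star_cos(3)[OF L_nonneg sol j] eig_sol_imp_star_cos(3)[OF L_nonneg sol' j] x
      by (auto simp: A_def star_cos_deriv_def)
    show "sin (k * (L j - x)) \<noteq> 0"
    proof (cases "x = 0")
      case True then show ?thesis using centre_slope j slope(2) by auto
    next
      case False then show ?thesis using no_crit j x slope(1) by auto
    qed
  qed
  moreover have "(\<Sum>j<n. tan (k * L j)) = 0"
    using generic \<open>0 < n\<close> cos_nonzero k L_nonneg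
    by (intro is_eigenvalue_sg_no_pole_imp_root)
      (auto simp: generic_sg_def eigenfunction_sg_def is_eigenvalue_sg_def)
  ultimately show ?thesis using star k cos_nonzero by (simp add: secular_root_star_def)
qed

lemma wl_capacity_reflect:
  assumes "k \<noteq> 0"
  shows "wl_capacity n L k + wl_capacity n (\<lambda>j. pi / k - L j) k = real n"
proof -
  have "total_length n L + total_length n (\<lambda>j. pi / k - L j) = real n * (pi / k)"
    unfolding total_length_def by (simp add: sum.distrib[symmetric])
  then have "wl_capacity n L k + wl_capacity n (\<lambda>j. pi / k - L j) k = real n * (pi / k) * k / pi"
    unfolding wl_capacity_def by (simp add: add_divide_distrib[symmetric] distrib_right[symmetric])
  then show ?thesis using assms by simp
qed

context secular_root_star
begin

lemma exists_generic_no_neumann: "\<exists>g. generic_sg n L (k^2) g \<and> no_neumann_points n L (k^2) g"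
proof -
  define A where "A j = 1 / cos (k * L j)" for j
  have A_nonzero: "A j \<noteq> 0" if "j < n" for j using cos_nonzero that by (simp add: A_def)
  have "(\<Sum>j<n. A j * k * sin (k * L j)) = k * (\<Sum>j<n. tan (k * L j))"
    by (simp add: A_def tan_def sum_distrib_left field_simps)
  then have "vertex_conds n L k A"
    using secular_root cos_nonzero unfolding vertex_conds_def by (simp add: A_def)
  then have sol: "eig_sol n L (k^2) (star_cos n L k A) (star_cos_deriv L k A)"
    by (rule eig_sol_star_cos[OF L_nonneg])
  have slope: "star_cos_deriv L k A j x \<noteq> 0" if "j < n" "x \<in> {0..<L j}" for j x
  proof -
    have "k * (L j - x) \<le> k * L j" using that k_pos by (simp add: algebra_simps)
    then have "k * (L j - x) < pi" using edges_short that(1) by force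
    moreover have "0 < k * (L j - x)" using that k_pos by simp
    ultimately have "0 < sin (k * (L j - x))" by (intro sin_gt_zero)
    then show ?thesis using A_nonzero that k_pos by (simp add: star_cos_deriv_def)
  qed
  have "star_cos n L k A \<in> eigenspace_sg n L (k^2)" using sol unfolding eigenspace_sg_def by blast
  moreover have "star_cos n L k A \<noteq> 0" using n_pos L_nonneg A_nonzero by (intro star_cos_nonzero) auto
  moreover have "multiplicity_sg n L (k^2) = 1"
    by (rule multiplicity_sg_no_pole_root[OF L_nonneg n_pos cos_nonzero secular_root])
  moreover have "star_cos n L k A j 0 \<noteq> 0 \<and> star_cos n L k A j (L j) \<noteq> 0" if "j < n" for j
    using that L_nonneg A_nonzero cos_nonzero by (simp add: star_cos_centre star_cos_leaf)
  moreover have "star_cos_deriv L k A j 0 \<noteq> 0" if "j < n" for j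
    using slope that L_pos by simp
  moreover have "star_cos_deriv L k A j x \<noteq> 0" if "j < n" "x \<in> {0<..<L j}" for j x
    using slope that by simp
  ultimately show ?thesis
    unfolding generic_sg_def eigenfunction_sg_def no_neumann_points_def using sol by blast
qed

lemma secular_root_star_reflected: "secular_root_star n (\<lambda>j. pi / k - L j) k"
proof -
  have angle: "k * (pi / k - L j) = pi - k * L j" for j using k_pos by (simp add: algebra_simps)
  have "0 < pi / k - L j" if "j < n" for j
    using edges_short that k_pos by (simp add: pos_less_divide_eq mult.commute)
  then have "star_graph n (\<lambda>j. pi / k - L j)" using star by (simp add: star_graph_def)
  moreover have "tan (pi - x) = - tan x" for x by (simp add: tan_def)
  ultimately show ?thesis
    using k_pos angle_bounds(1)[of k] cos_nonzero secular_root
    unfolding secular_root_star_def angle by (simp add: sum_negf)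
qed

lemma card_long_edges_reflect:
  "card {j. j < n \<and> pi/2 < k * L j} + card {j. j < n \<and> pi/2 < k * (pi / k - L j)} = n"
proof -
  have angle: "k * (pi / k - L j) = pi - k * L j" for j using k_pos by (simp add: algebra_simps)
  have "{j. j < n \<and> pi/2 < k * L j} \<union> {j. j < n \<and> pi/2 < k * (pi / k - L j)} = {..<n}"
    using not_quarter_wave unfolding angle by force
  moreover have "card ({j. j < n \<and> pi/2 < k * L j} \<union> {j. j < n \<and> pi/2 < k * (pi / k - L j)}) =
      card {j. j < n \<and> pi/2 < k * L j} + card {j. j < n \<and> pi/2 < k * (pi / k - L j)}"
    by (rule card_Un_disjoint) (auto simp: angle)
  ultimately show ?thesis by simp
qed

end

theorem lemma3p2:
  fixes n :: nat and L :: "nat \<Rightarrow> real" and k :: real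
    and f :: "nat \<Rightarrow> real \<Rightarrow> real"
  assumes "star_graph n L"
    and "k > 0"
    and "generic_sg n L (k^2) f"
    and "no_neumann_points n L (k^2) f"
  shows "\<exists>n' L'. star_graph n' L' \<and> n' = n \<and>
           (\<exists>g. generic_sg n' L' (k^2) g \<and> no_neumann_points n' L' (k^2) g) \<and>
           spec_pos n L k + spec_pos n' L' k = n \<and>
           wl_capacity n L k + wl_capacity n' L' k = real n"
proof -
  interpret secular_root_star n L k
    using generic_no_neumann_imp_secular_root_star assms by blast
  define L' where "L' = (\<lambda>j. pi / k - L j)"
  interpret reflected: secular_root_star n L' k
    unfolding L'_def by (rule secular_root_star_reflected)
  have "spec_pos n L k + spec_pos n L' k = n"
    using card_long_edges_reflect spec_pos_eq_card_long_edges reflected.spec_pos_eq_card_long_edges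
    by (simp add: L'_def)
  moreover have "wl_capacity n L k + wl_capacity n L' k = real n"
    unfolding L'_def using k_pos by (simp add: wl_capacity_reflect)
  ultimately show ?thesis
    using reflected.star reflected.exists_generic_no_neumann by blast
qed

end
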